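(* Let $p,q\ge 3$ be relatively prime odd integers and let $\omega_j=e^{2\pi i j/p}$. Then $$\sum_{\substack{n=1\\ p\nmid n,\ q\nmid n}}^{pq-1}\frac{\cot(\pi n/p)\cot(\pi n/q)}{\cos^2(\pi n/(pq))}=\frac{2}{3p}(p^2-1)(5q+3)+\frac{32}{p}\sum_{j=1}^{p-1}\frac{\omega_j}{(\omega_j+1)^3(\omega_j^q-1)}-\frac{32q}{p}\sum_{j=1}^{p-1}\frac{\omega_j}{(\omega_j+1)^2(\omega_j^q-1)^2}.$$ *)

theory Defs
  imports "HOL-Analysis.Analysis"
begin

end

theory Submission
  imports Defs
begin

(* With z = exp(2 pi i n/(pq)) one has cot(pi n/p) = i (z^q + 1)/(z^q - 1),
   cot(pi n/q) = i (z^p + 1)/(z^p - 1) and cos^2(pi n/(pq)) = (z + 1)^2/(4z), so the left-hand side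
   is a sum of a rational function over the pq-th roots of unity z with z^p, z^q \<noteq> 1.  Since p and q
   are coprime, these z are exactly the products u v with u^p = 1 \<noteq> u and v^q = 1 \<noteq> v, and then
   z^q = u^q.  For fixed u, the partial fraction expansion of (z^p + 1)/(z^p - 1) * 4z/(z + 1)^2 over
   its poles at the p-th roots of unity and at -1 reduces the inner sum over v to resolvent sums
   \<Sum>v. 1/(u v - w), all given by \<Sum>{v^q = 1}. 1/(x - v) = q x^(q-1)/(x^q - 1).  The remaining double
   sum over p-th roots of unity is evaluated the same way after reindexing by the permutation
   u \<mapsto> u^q.  In the variable a = 1/(u + 1), what is left beyond the right-hand summand has the form
   alpha(a) + beta(a)/(u^q - 1), and the involution u \<mapsto> 1/u, i.e. a \<mapsto> 1 - a, sums it to a constant. *)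

section \<open>Sums over roots of unity\<close>

definition unit_roots :: "nat \<Rightarrow> complex set" where
  "unit_roots m = {z. z ^ m = 1}"

lemma mem_unit_roots [simp]: "z \<in> unit_roots m \<longleftrightarrow> z ^ m = 1"
  by (simp add: unit_roots_def)

lemma finite_unit_roots [simp]: "m > 0 \<Longrightarrow> finite (unit_roots m)"
  unfolding unit_roots_def by (rule finite_roots_unity) simp

lemma card_unit_roots: "m > 0 \<Longrightarrow> card (unit_roots m) = m"
  unfolding unit_roots_def by (rule card_roots_unity_eq)

lemma unit_roots_nonzero: "m > 0 \<Longrightarrow> z \<in> unit_roots m \<Longrightarrow> z \<noteq> 0"
  by (auto simp: zero_power)

lemma power_mem_unit_roots: "z \<in> unit_roots m \<Longrightarrow> z ^ k \<in> unit_roots m"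
  by (metis mem_unit_roots power_mult mult.commute power_one)

lemma unit_roots_odd_plus_one_nonzero: "odd m \<Longrightarrow> z \<in> unit_roots m \<Longrightarrow> z + 1 \<noteq> 0"
  by (auto simp: add_eq_0_iff2)

lemma power_unit_root_mod: "(z::'a::monoid_mult) ^ m = 1 \<Longrightarrow> z ^ j = z ^ (j mod m)"
proof -
  assume h: "z ^ m = 1"
  have "z ^ j = z ^ (m * (j div m)) * z ^ (j mod m)"
    by (metis power_add div_mult_mod_eq mult.commute)
  then show ?thesis by (simp add: power_mult h)
qed

lemma primitive_root_power_eq_1_iff:
  assumes "m > 0"
  shows "cis (2 * pi / real m) ^ j = 1 \<longleftrightarrow> m dvd j"
proof -
  define w where "w = cis (2 * pi / real m)"
  have wk: "w ^ k = cis (2 * pi * real k / real m)" for k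
    unfolding w_def Complex.DeMoivre by (rule arg_cong[where f=cis]) simp
  have wm: "w ^ m = 1" unfolding wk using assms by simp
  have inj: "inj_on (\<lambda>k. cis (2 * pi * real k / real m)) {..<m}"
    using Complex.bij_betw_roots_unity[OF assms] by (simp add: bij_betw_def)
  have "w ^ j = 1 \<longleftrightarrow> w ^ (j mod m) = w ^ 0" using power_unit_root_mod[OF wm, of j] by simp
  also have "\<dots> \<longleftrightarrow> j mod m = 0"
    using inj_onD[OF inj, of "j mod m" 0] assms unfolding wk by auto
  finally show ?thesis by (simp add: w_def dvd_eq_mod_eq_0)
qed

lemma sum_cis_eq_sum_nontrivial_unit_roots:
  assumes "p > 0"
  shows "(\<Sum>j=1..p-1. h (cis (2 * pi * real j / real p))) = (\<Sum>u\<in>unit_roots p - {1}. h u)"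
proof -
  have "bij_betw (\<lambda>k. cis (2 * pi * real k / real p)) {..<p} (unit_roots p)"
    using Complex.bij_betw_roots_unity[OF assms] by (simp add: unit_roots_def)
  then have "bij_betw (\<lambda>k. cis (2 * pi * real k / real p)) ({..<p} - {0}) (unit_roots p - {1})"
    by (rule bij_betw_DiffI) (use assms in auto)
  moreover have "{..<p} - {0} = {1..p-1}" using assms by auto
  ultimately have "bij_betw (\<lambda>k. cis (2 * pi * real k / real p)) {1..p-1} (unit_roots p - {1})"
    by simp
  then show ?thesis by (rule sum.reindex_bij_betw)
qed

lemma sum_unit_roots_mult:
  assumes "m > 0" "b \<in> unit_roots m"
  shows "(\<Sum>z\<in>unit_roots m. f (b * z)) = (\<Sum>z\<in>unit_roots m. f z)"
proof -
  have b0: "b \<noteq> 0" using unit_roots_nonzero[OF assms] .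
  show ?thesis
    by (rule sum.reindex_bij_witness[where i="\<lambda>z. z / b" and j="\<lambda>z. b * z"])
       (use assms b0 in \<open>auto simp: power_divide power_mult_distrib\<close>)
qed

lemma sum_unit_roots_inverse:
  "(\<Sum>z\<in>unit_roots m. f (inverse z)) = (\<Sum>z\<in>unit_roots m. f z)"
  by (rule sum.reindex_bij_witness[where i=inverse and j=inverse]) (auto simp: power_inverse)

lemma sum_unit_roots_power:
  assumes "m > 0"
  shows "(\<Sum>z\<in>unit_roots m. z ^ j) = (if m dvd j then of_nat m else 0)"
proof (cases "m dvd j")
  case True
  then obtain k where k: "j = m * k" by blast
  have "(\<Sum>z\<in>unit_roots m. z ^ j) = (\<Sum>z\<in>unit_roots m. 1)"
    by (rule sum.cong) (auto simp: k power_mult)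
  then show ?thesis using True card_unit_roots[OF assms] by simp
next
  case False
  define w where "w = cis (2 * pi / real m)"
  have w: "w ^ m = 1" "w ^ j \<noteq> 1"
    using primitive_root_power_eq_1_iff[OF assms] False by (auto simp: w_def)
  have "(\<Sum>z\<in>unit_roots m. z ^ j) = (\<Sum>z\<in>unit_roots m. (w * z) ^ j)"
    using sum_unit_roots_mult[OF assms, of w "\<lambda>z. z ^ j"] w by simp
  also have "\<dots> = w ^ j * (\<Sum>z\<in>unit_roots m. z ^ j)"
    by (simp add: power_mult_distrib sum_distrib_left)
  finally have "(1 - w ^ j) * (\<Sum>z\<in>unit_roots m. z ^ j) = 0" by (simp add: algebra_simps)
  then show ?thesis using w False by simp
qed

lemma sum_unit_roots_inverse_diff:
  assumes "m > 0" "x ^ m \<noteq> 1"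
  shows "(\<Sum>z\<in>unit_roots m. 1 / (x - z)) = of_nat m * x ^ (m - 1) / (x ^ m - 1)"
proof -
  obtain n where n: "m = Suc n" using assms by (cases m) auto
  have xm: "x ^ m - 1 \<noteq> 0" using assms by simp
  have eq: "1 / (x - z) = (\<Sum>i<m. x ^ i * z ^ (n - i)) / (x ^ m - 1)"
    if z: "z \<in> unit_roots m" for z
  proof -
    have "x ^ m - 1 = x ^ m - z ^ m" using z by simp
    also have "\<dots> = (x - z) * (\<Sum>i<m. x ^ i * z ^ (n - i))"
      unfolding n by (rule diff_power_eq_sum)
    finally have h: "x ^ m - 1 = (x - z) * (\<Sum>i<m. x ^ i * z ^ (n - i))" .
    then have "x - z \<noteq> 0" using xm by auto
    then show ?thesis using h xm by (simp add: field_simps)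
  qed
  have "(\<Sum>z\<in>unit_roots m. 1 / (x - z))
      = (\<Sum>z\<in>unit_roots m. \<Sum>i<m. x ^ i * z ^ (n - i)) / (x ^ m - 1)"
    by (simp add: eq sum_divide_distrib)
  also have "(\<Sum>z\<in>unit_roots m. \<Sum>i<m. x ^ i * z ^ (n - i))
      = (\<Sum>i<m. x ^ i * (\<Sum>z\<in>unit_roots m. z ^ (n - i)))"
    by (subst sum.swap) (simp add: sum_distrib_left)
  also have "\<dots> = (\<Sum>i<m. if i = n then of_nat m * x ^ n else 0)"
  proof (rule sum.cong[OF refl])
    fix i assume i: "i \<in> {..<m}"
    have "m dvd (n - i) \<longleftrightarrow> i = n"
    proof
      assume "m dvd (n - i)"
      moreover have "n - i < m" using n by simp
      ultimately have "n - i = 0" using dvd_imp_le by (cases "n - i = 0") auto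
      then show "i = n" using i n by simp
    qed simp
    then show "x ^ i * (\<Sum>z\<in>unit_roots m. z ^ (n - i)) = (if i = n then of_nat m * x ^ n else 0)"
      using sum_unit_roots_power[OF assms(1), of "n - i"] by auto
  qed
  also have "\<dots> = of_nat m * x ^ n" using n by simp
  finally show ?thesis using n by simp
qed

lemma sum_unit_roots_root_over_diff:
  assumes "m > 0" "x ^ m \<noteq> 1"
  shows "(\<Sum>z\<in>unit_roots m. z / (x - z)) = of_nat m / (x ^ m - 1)"
proof -
  have "x - z \<noteq> 0" if "z \<in> unit_roots m" for z using that assms by auto
  then have "(\<Sum>z\<in>unit_roots m. z / (x - z)) = (\<Sum>z\<in>unit_roots m. x * (1 / (x - z)) - 1)"
    by (intro sum.cong) (auto simp: field_simps)
  also have "\<dots> = x * (of_nat m * x ^ (m - 1) / (x ^ m - 1)) - of_nat m"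
    unfolding sum_subtractf sum_distrib_left[symmetric] sum_unit_roots_inverse_diff[OF assms]
    using card_unit_roots[OF assms(1)] by simp
  also have "x * x ^ (m - 1) = x ^ m" using assms by (simp add: power_Suc[symmetric])
  then have "x * (of_nat m * x ^ (m - 1) / (x ^ m - 1)) - of_nat m
      = of_nat m * x ^ m / (x ^ m - 1) - of_nat m"
    by (simp add: algebra_simps)
  also have "\<dots> = of_nat m / (x ^ m - 1)" using assms by (simp add: field_simps)
  finally show ?thesis .
qed

lemma sum_unit_roots_inverse_one_minus:
  assumes "m > 0"
  shows "(\<Sum>z\<in>unit_roots m - {1}. 1 / (1 - z)) = (of_nat m - 1) / 2"
proof -
  let ?A = "unit_roots m - {1}"
  \<comment> \<open>pair z with 1/z: the two terms add up to 1\<close>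
  have "(\<Sum>z\<in>?A. 1 / (1 - z)) = (\<Sum>z\<in>?A. 1 / (1 - inverse z))"
    by (rule sum.reindex_bij_witness[where i=inverse and j=inverse]) (auto simp: power_inverse)
  then have "2 * (\<Sum>z\<in>?A. 1 / (1 - z)) = (\<Sum>z\<in>?A. 1 / (1 - z) + 1 / (1 - inverse z))"
    by (simp add: sum.distrib)
  also have "\<dots> = (\<Sum>z\<in>?A. 1)"
  proof (rule sum.cong[OF refl])
    fix z assume z: "z \<in> ?A"
    then have "z \<noteq> 0" "z - 1 \<noteq> 0" using unit_roots_nonzero[OF assms] by auto
    then have "1 / (1 - inverse z) = 1 + 1 / (z - 1)" by (simp add: field_simps)
    moreover have "1 / (1 - z) = - (1 / (z - 1))" by (metis minus_diff_eq divide_minus_right)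
    ultimately show "1 / (1 - z) + 1 / (1 - inverse z) = 1" by simp
  qed
  also have "\<dots> = of_nat m - 1" using assms by (simp add: card_unit_roots of_nat_diff)
  finally show ?thesis by (simp add: field_simps)
qed

lemma sum_unit_roots_inverse_minus_one:
  assumes "m > 0"
  shows "(\<Sum>z\<in>unit_roots m - {1}. 1 / (z - 1)) = - (of_nat m - 1) / 2"
proof -
  have "(\<Sum>z\<in>unit_roots m - {1}. 1 / (z - 1)) = (\<Sum>z\<in>unit_roots m - {1}. - (1 / (1 - z)))"
    by (rule sum.cong[OF refl]) (simp add: divide_minus_right[symmetric])
  also have "\<dots> = - ((of_nat m - 1) / 2)"
    by (simp only: sum_negf sum_unit_roots_inverse_one_minus[OF assms])
  finally show ?thesis by (simp only: minus_divide_left)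
qed

lemma sum_unit_roots_inverse_diff_root:
  assumes "m > 0" "b \<in> unit_roots m"
  shows "(\<Sum>z\<in>unit_roots m - {b}. 1 / (b - z)) = (of_nat m - 1) / (2 * b)"
proof -
  have b0: "b \<noteq> 0" using unit_roots_nonzero[OF assms] .
  have "(\<Sum>z\<in>unit_roots m - {b}. 1 / (b - z)) = (\<Sum>z\<in>unit_roots m - {1}. 1 / (b - b * z))"
    by (rule sum.reindex_bij_witness[where j="\<lambda>z. z / b" and i="\<lambda>z. b * z"])
       (use assms b0 in \<open>auto simp: power_divide power_mult_distrib\<close>)
  also have "\<dots> = (\<Sum>z\<in>unit_roots m - {1}. 1 / (1 - z)) / b"
    unfolding sum_divide_distrib by (intro sum.cong) (use b0 in \<open>auto simp: field_simps\<close>)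
  finally show ?thesis
    using sum_unit_roots_inverse_one_minus[OF assms(1)] b0 by (simp add: field_simps)
qed

lemma sum_unit_roots_inverse_plus_one:
  assumes "odd m"
  shows "(\<Sum>z\<in>unit_roots m. 1 / (z + 1)) = of_nat m / 2"
proof -
  have m0: "m > 0" using assms by (cases m) auto
  have "2 * (\<Sum>z\<in>unit_roots m. 1 / (z + 1))
      = (\<Sum>z\<in>unit_roots m. 1 / (z + 1) + 1 / (inverse z + 1))"
    using sum_unit_roots_inverse[of "\<lambda>z. 1 / (z + 1)" m] by (simp add: sum.distrib)
  also have "\<dots> = (\<Sum>z\<in>unit_roots m. 1)"
  proof (rule sum.cong[OF refl])
    fix z assume z: "z \<in> unit_roots m"
    then have "z \<noteq> 0" "z + 1 \<noteq> 0"
      using unit_roots_nonzero[OF m0] unit_roots_odd_plus_one_nonzero[OF assms] by auto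
    then show "1 / (z + 1) + 1 / (inverse z + 1) = 1" by (simp add: field_simps)
  qed
  also have "\<dots> = of_nat m" using m0 by (simp add: card_unit_roots)
  finally show ?thesis by (simp add: field_simps)
qed

lemma sum_unit_roots_product_of_polys:
  assumes "m > 0"
  shows "(\<Sum>z\<in>unit_roots m. (\<Sum>i<m. a i * z ^ i) * (\<Sum>j<m. b j * z ^ j)) =
         of_nat m * (a 0 * b 0 + (\<Sum>i\<in>{1..<m}. a i * b (m - i)))"
proof -
  have "(\<Sum>z\<in>unit_roots m. (\<Sum>i<m. a i * z ^ i) * (\<Sum>j<m. b j * z ^ j))
      = (\<Sum>i<m. \<Sum>j<m. a i * b j * (\<Sum>z\<in>unit_roots m. z ^ (i + j)))"
  proof -
    have "(\<Sum>z\<in>unit_roots m. (\<Sum>i<m. a i * z ^ i) * (\<Sum>j<m. b j * z ^ j))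
        = (\<Sum>z\<in>unit_roots m. \<Sum>i<m. \<Sum>j<m. a i * b j * z ^ (i + j))"
      by (simp add: sum_product power_add mult_ac)
    also have "\<dots> = (\<Sum>i<m. \<Sum>j<m. \<Sum>z\<in>unit_roots m. a i * b j * z ^ (i + j))"
      by (subst sum.swap) (rule sum.cong[OF refl], rule sum.swap)
    finally show ?thesis by (simp add: sum_distrib_left)
  qed
  also have "\<dots> = (\<Sum>i<m. of_nat m * (if i = 0 then a 0 * b 0 else a i * b (m - i)))"
  proof (rule sum.cong[OF refl])
    fix i assume i: "i \<in> {..<m}"
    define j0 where "j0 = (if i = 0 then 0 else m - i)"
    have dv: "m dvd (i + j) \<longleftrightarrow> j = j0" if "j < m" for j
    proof
      assume d: "m dvd (i + j)"
      have "i + j < 2 * m" using i that by simp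
      with d obtain k where k: "i + j = m * k" "k < 2" by (auto elim!: dvdE)
      then have "k = 0 \<or> k = 1" by auto
      then show "j = j0" using k i that by (auto simp: j0_def)
    qed (use i in \<open>auto simp: j0_def\<close>)
    have "j0 < m" using i assms by (auto simp: j0_def)
    then have "(\<Sum>j<m. a i * b j * (\<Sum>z\<in>unit_roots m. z ^ (i + j))) = a i * b j0 * of_nat m"
      by (simp add: sum_unit_roots_power[OF assms] dv if_distrib cong: if_cong)
    then show "(\<Sum>j<m. a i * b j * (\<Sum>z\<in>unit_roots m. z ^ (i + j)))
        = of_nat m * (if i = 0 then a 0 * b 0 else a i * b (m - i))"
      by (simp add: j0_def)
  qed
  also have "\<dots> = of_nat m * (\<Sum>i<m. (if i = 0 then a 0 * b 0 else a i * b (m - i)))"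
    by (simp add: sum_distrib_left)
  also have "(\<Sum>i<m. (if i = 0 then a 0 * b 0 else a i * b (m - i)))
      = a 0 * b 0 + (\<Sum>i\<in>{1..<m}. a i * b (m - i))"
  proof -
    have "{..<m} = insert 0 {1..<m}" using assms by auto
    then show ?thesis by (simp add: sum.insert)
  qed
  finally show ?thesis .
qed

lemma inverse_plus_one_unit_root_expansion:
  assumes "odd m" "z \<in> unit_roots m"
  shows "1 / (z + 1) = (\<Sum>k<m. ((-1) ^ k / 2) * z ^ k)"
proof -
  have "1 - (- z) ^ m = (1 - (- z)) * (\<Sum>k<m. (- z) ^ k)" by (rule one_diff_power_eq)
  moreover have "(- z) ^ m = -1" using assms by (simp add: power_minus_odd)
  moreover have "(\<Sum>k<m. (- z) ^ k) = (\<Sum>k<m. (-1) ^ k * z ^ k)"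
    by (rule sum.cong[OF refl]) (rule power_minus)
  ultimately have h: "2 = (z + 1) * (\<Sum>k<m. (-1) ^ k * z ^ k)" by (simp add: add.commute)
  have "z + 1 \<noteq> 0" using unit_roots_odd_plus_one_nonzero[OF assms] .
  then have "(\<Sum>k<m. (-1) ^ k * z ^ k) / 2 = 1 / (z + 1)"
    using h by (simp add: field_simps)
  then show ?thesis by (simp add: sum_divide_distrib)
qed

lemma sum_unit_roots_inverse_plus_one_squared:
  assumes "odd m"
  shows "(\<Sum>z\<in>unit_roots m. 1 / (z + 1) ^ 2) = of_nat m * (2 - of_nat m) / 4"
proof -
  have m0: "m > 0" using assms by (cases m) auto
  let ?a = "\<lambda>k::nat. ((-1::complex) ^ k / 2)"
  have "(\<Sum>z\<in>unit_roots m. 1 / (z + 1) ^ 2)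
      = (\<Sum>z\<in>unit_roots m. (\<Sum>i<m. ?a i * z ^ i) * (\<Sum>j<m. ?a j * z ^ j))"
  proof (rule sum.cong[OF refl])
    fix z assume z: "z \<in> unit_roots m"
    have "1 / (z + 1) ^ 2 = (1 / (z + 1)) * (1 / (z + 1))" by (simp add: power2_eq_square)
    then show "1 / (z + 1) ^ 2 = (\<Sum>i<m. ?a i * z ^ i) * (\<Sum>j<m. ?a j * z ^ j)"
      unfolding inverse_plus_one_unit_root_expansion[OF assms z] .
  qed
  also have "\<dots> = of_nat m * (?a 0 * ?a 0 + (\<Sum>i\<in>{1..<m}. ?a i * ?a (m - i)))"
    by (rule sum_unit_roots_product_of_polys[OF m0])
  also have "(\<Sum>i\<in>{1..<m}. ?a i * ?a (m - i)) = (\<Sum>i\<in>{1..<m}. - 1 / 4)"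
  proof (rule sum.cong[OF refl])
    fix i assume "i \<in> {1..<m}"
    then have "(-1::complex) ^ i * (-1) ^ (m - i) = (-1) ^ m" by (simp add: power_add[symmetric])
    then show "?a i * ?a (m - i) = - 1 / 4" using assms by (simp add: field_simps)
  qed
  finally show ?thesis using m0 by (simp add: of_nat_diff field_simps)
qed

lemma weighted_geometric_sum:
  fixes z :: "'a::comm_ring_1"
  shows "(z - 1) ^ 2 * (\<Sum>k<n. of_nat k * z ^ k)
       = of_nat n * z ^ (n + 1) - z ^ (n + 1) - of_nat n * z ^ n + z"
proof (induction n)
  case (Suc n)
  have "(z - 1) ^ 2 * (\<Sum>k<Suc n. of_nat k * z ^ k)
      = (z - 1) ^ 2 * (\<Sum>k<n. of_nat k * z ^ k) + (z - 1) ^ 2 * (of_nat n * z ^ n)"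
    by (simp add: algebra_simps)
  then show ?case unfolding Suc.IH by (simp add: algebra_simps power2_eq_square)
qed simp

lemma weighted_sum_unit_root:
  assumes "(z::complex) ^ m = 1" "z \<noteq> 1"
  shows "(\<Sum>k<m. of_nat k * z ^ k) = of_nat m / (z - 1)"
proof -
  let ?S = "\<Sum>k<m. of_nat k * z ^ k"
  have zz: "z ^ (m + 1) = z" using assms by simp
  have "(z - 1) ^ 2 * ?S = of_nat m * z - z - of_nat m * 1 + z"
    using weighted_geometric_sum[of z m] unfolding zz assms(1) .
  also have "\<dots> = (z - 1) * of_nat m" by (simp add: algebra_simps)
  finally have "(z - 1) * ((z - 1) * ?S) = (z - 1) * of_nat m"
    by (simp add: power2_eq_square mult.assoc)
  moreover have "z - 1 \<noteq> 0" using assms by simp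
  ultimately have "(z - 1) * ?S = of_nat m" by simp
  then show ?thesis using \<open>z - 1 \<noteq> 0\<close> by (simp add: eq_divide_eq mult.commute)
qed

lemma sum_of_nat_lessThan:
  "(\<Sum>i<n. of_nat i :: 'a::field_char_0) = of_nat n * (of_nat n - 1) / 2"
  by (induction n) (simp_all add: field_simps)

lemma sum_of_nat_times_complement:
  "(\<Sum>i<n. of_nat i * (of_nat n - of_nat i) :: 'a::field_char_0)
     = (of_nat n - 1) * of_nat n * (of_nat n + 1) / 6"
proof (induction n)
  case (Suc n)
  have "(\<Sum>i<Suc n. of_nat i * (of_nat (Suc n) - of_nat i) :: 'a)
      = (\<Sum>i<n. of_nat i * (of_nat (Suc n) - of_nat i)) + of_nat n"
    by (simp add: lessThan_Suc)
  also have "(\<Sum>i<n. of_nat i * (of_nat (Suc n) - of_nat i) :: 'a)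
      = (\<Sum>i<n. of_nat i * (of_nat n - of_nat i) + of_nat i)"
    by (rule sum.cong) (simp_all add: algebra_simps)
  also have "\<dots> = (\<Sum>i<n. of_nat i * (of_nat n - of_nat i)) + (\<Sum>i<n. of_nat i)"
    by (rule sum.distrib)
  finally have step: "(\<Sum>i<Suc n. of_nat i * (of_nat (Suc n) - of_nat i) :: 'a)
      = (\<Sum>i<n. of_nat i * (of_nat n - of_nat i)) + (\<Sum>i<n. of_nat i) + of_nat n" .
  show ?case unfolding step Suc.IH sum_of_nat_lessThan by (simp add: field_simps)
qed simp

lemma sum_unit_roots_inverse_minus_one_squared:
  assumes "m > 0"
  shows "(\<Sum>z\<in>unit_roots m - {1}. 1 / (z - 1) ^ 2) = (of_nat m - 1) * (5 - of_nat m) / 12"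
proof -
  let ?a = "\<lambda>k::nat. (of_nat k / of_nat m :: complex)"
  let ?f = "\<lambda>z. (\<Sum>i<m. ?a i * z ^ i) * (\<Sum>j<m. ?a j * z ^ j)"
  have mz: "(of_nat m :: complex) \<noteq> 0" using assms by simp
  \<comment> \<open>on the roots z \<noteq> 1, the polynomial with coefficients k/m is 1/(z - 1)\<close>
  have "1 / (z - 1) ^ 2 = ?f z" if "z \<in> unit_roots m - {1}" for z
  proof -
    have "(\<Sum>i<m. ?a i * z ^ i) = (\<Sum>i<m. of_nat i * z ^ i) / of_nat m"
      by (simp add: sum_divide_distrib)
    also have "\<dots> = 1 / (z - 1)" using weighted_sum_unit_root[of z m] that mz by simp
    finally show ?thesis by (simp add: power2_eq_square)
  qed
  then have "(\<Sum>z\<in>unit_roots m - {1}. 1 / (z - 1) ^ 2) = (\<Sum>z\<in>unit_roots m. ?f z) - ?f 1"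
    using assms by (simp add: sum_diff1)
  moreover have "(\<Sum>z\<in>unit_roots m. ?f z)
      = of_nat m * (?a 0 * ?a 0 + (\<Sum>i\<in>{1..<m}. ?a i * ?a (m - i)))"
    by (rule sum_unit_roots_product_of_polys[OF assms])
  moreover have "(\<Sum>i\<in>{1..<m}. ?a i * ?a (m - i))
      = (\<Sum>i<m. of_nat i * (of_nat m - of_nat i)) / of_nat m ^ 2"
  proof -
    have "(\<Sum>i\<in>{1..<m}. ?a i * ?a (m - i))
        = (\<Sum>i\<in>{1..<m}. of_nat i * (of_nat m - of_nat i) / of_nat m ^ 2)"
      by (rule sum.cong[OF refl]) (auto simp: of_nat_diff power2_eq_square)
    also have "\<dots> = (\<Sum>i<m. of_nat i * (of_nat m - of_nat i) / of_nat m ^ 2)"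
    proof -
      have "{..<m} = insert 0 {1..<m}" using assms by auto
      then show ?thesis by (simp add: sum.insert)
    qed
    finally show ?thesis by (simp add: sum_divide_distrib)
  qed
  moreover have "?f 1 = ((of_nat m - 1) / 2) ^ 2"
  proof -
    have "(\<Sum>i<m. ?a i * 1 ^ i) = (\<Sum>i<m. of_nat i) / of_nat m"
      by (simp add: sum_divide_distrib)
    also have "\<dots> = (of_nat m - 1) / 2" unfolding sum_of_nat_lessThan using mz by simp
    finally show ?thesis by (simp only: power2_eq_square)
  qed
  ultimately have "(\<Sum>z\<in>unit_roots m - {1}. 1 / (z - 1) ^ 2)
      = of_nat m * ((of_nat m - 1) * of_nat m * (of_nat m + 1) / 6 / of_nat m ^ 2)
        - ((of_nat m - 1) / 2) ^ 2"
    unfolding sum_of_nat_times_complement by simp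
  also have "\<dots> = (of_nat m - 1) * (5 - of_nat m) / 12"
    using mz by (simp add: field_simps power2_eq_square)
  finally show ?thesis .
qed

lemma unit_roots_coprime_eq_1:
  assumes "coprime p q" "p > 0" "(z::complex) ^ p = 1" "z ^ q = 1"
  shows "z = 1"
proof -
  obtain x y where "p * x = q * y + gcd p q" using bezout_nat[of p q] assms(2) by auto
  then have xy: "p * x = q * y + 1" using assms(1) by simp
  have "1 = z ^ (p * x)" by (simp add: power_mult assms(3))
  also have "\<dots> = z" unfolding xy by (simp add: power_add power_mult assms(4))
  finally show ?thesis by simp
qed

lemma bij_betw_power_unit_roots:
  assumes "coprime p q" "p > 0"
  shows "bij_betw (\<lambda>u. u ^ q) (unit_roots p) (unit_roots p)"
proof -
  have inj: "inj_on (\<lambda>u. u ^ q) (unit_roots p)"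
  proof (rule inj_onI)
    fix u w assume u: "u \<in> unit_roots p" and w: "w \<in> unit_roots p" and e: "u ^ q = w ^ q"
    have w0: "w \<noteq> 0" using unit_roots_nonzero[OF assms(2) w] .
    have "(u / w) ^ p = 1" using u w by (simp add: power_divide)
    moreover have "(u / w) ^ q = 1" using e w0 by (simp add: power_divide)
    ultimately have "u / w = 1" using unit_roots_coprime_eq_1[OF assms] by blast
    then show "u = w" using w0 by simp
  qed
  have "(\<lambda>u. u ^ q) ` unit_roots p \<subseteq> unit_roots p"
    by (auto simp: power_mult[symmetric] mult.commute) (simp add: power_mult)
  then have "(\<lambda>u. u ^ q) ` unit_roots p = unit_roots p"
    using endo_inj_surj[OF finite_unit_roots[OF assms(2)] _ inj] by blast
  then show ?thesis using inj by (simp add: bij_betw_def)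
qed

lemma bij_betw_mult_unit_roots:
  assumes "coprime p q" "p > 0" "q > 0"
  shows "bij_betw (\<lambda>(u, v). u * v) (unit_roots p \<times> unit_roots q) (unit_roots (p * q))"
proof -
  have inj: "inj_on (\<lambda>(u, v). u * v) (unit_roots p \<times> unit_roots q)"
  proof (rule inj_onI, clarify)
    fix u v u' v' assume u: "u \<in> unit_roots p" and v: "v \<in> unit_roots q"
      and u': "u' \<in> unit_roots p" and v': "v' \<in> unit_roots q" and e: "u * v = u' * v'"
    have n0: "u' \<noteq> 0" "v \<noteq> 0" using unit_roots_nonzero assms u' v by blast+
    have e2: "u / u' = v' / v" using e n0 by (simp add: field_simps)
    have "(u / u') ^ p = 1" using u u' by (simp add: power_divide)
    moreover have "(u / u') ^ q = 1" unfolding e2 using v v' by (simp add: power_divide)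
    ultimately have "u / u' = 1" using unit_roots_coprime_eq_1[OF assms(1,2)] by blast
    then have "u = u'" using n0 by simp
    moreover from this e n0 have "v = v'" by simp
    ultimately show "u = u' \<and> v = v'" by simp
  qed
  have sub: "(\<lambda>(u, v). u * v) ` (unit_roots p \<times> unit_roots q) \<subseteq> unit_roots (p * q)"
  proof clarify
    fix u v assume "u \<in> unit_roots p" "v \<in> unit_roots q"
    then show "u * v \<in> unit_roots (p * q)"
      by (simp add: power_mult_distrib power_mult) (metis power_mult mult.commute power_one)
  qed
  have "card ((\<lambda>(u, v). u * v) ` (unit_roots p \<times> unit_roots q)) = card (unit_roots (p * q))"
    using assms inj by (simp add: card_image card_cartesian_product card_unit_roots)
  then have "(\<lambda>(u, v). u * v) ` (unit_roots p \<times> unit_roots q) = unit_roots (p * q)"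
    using card_subset_eq[OF _ sub] assms by simp
  then show ?thesis using inj by (simp add: bij_betw_def)
qed

section \<open>From cotangents to roots of unity\<close>

definition cot_ratio :: "complex \<Rightarrow> complex" where
  "cot_ratio U = (U + 1) / (U - 1)"

definition psi :: "nat \<Rightarrow> complex \<Rightarrow> complex" where
  "psi p z = cot_ratio (z ^ p) * (4 * z / (z + 1) ^ 2)"

lemma cis_double: "cis (2 * y) = (complex_of_real (cos y) + \<i> * complex_of_real (sin y)) ^ 2"
proof -
  have "cis (2 * y) = cis y ^ 2" by (simp add: Complex.DeMoivre)
  then show ?thesis by (simp add: cis.code Complex_eq)
qed

lemma cot_eq_cot_ratio_cis:
  assumes "cis (2 * y) \<noteq> 1"
  shows "complex_of_real (cot y) = \<i> * cot_ratio (cis (2 * y))"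
proof -
  define c where "c = complex_of_real (cos y)"
  define s where "s = complex_of_real (sin y)"
  have cs: "c ^ 2 + s ^ 2 = 1" unfolding c_def s_def
    by (metis of_real_add of_real_1 of_real_power sin_cos_squared_add2)
  have e: "cis (2 * y) = (c + \<i> * s) ^ 2" unfolding c_def s_def by (rule cis_double)
  have s0: "s \<noteq> 0"
  proof
    assume "s = 0"
    then have "c ^ 2 = 1" using cs by simp
    then have "cis (2 * y) = 1" using e \<open>s = 0\<close> by simp
    with assms show False by simp
  qed
  have p1: "cis (2 * y) + 1 = (c + \<i> * s) * (2 * c)"
    using cs unfolding e by (simp add: algebra_simps power2_eq_square)
  have p2: "cis (2 * y) - 1 = (c + \<i> * s) * (2 * \<i> * s)"
    using cs unfolding e by (simp add: algebra_simps power2_eq_square)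
  have "\<i> * (cis (2 * y) + 1) * s = c * (cis (2 * y) - 1)"
    unfolding p1 p2 by (simp add: algebra_simps)
  moreover have "cis (2 * y) - 1 \<noteq> 0" using assms by simp
  ultimately have "c / s = \<i> * (cis (2 * y) + 1) / (cis (2 * y) - 1)"
    using s0 by (simp add: field_simps)
  then show ?thesis by (simp add: c_def s_def cot_def cot_ratio_def)
qed

lemma cos_squared_eq_cis: "complex_of_real ((cos y) ^ 2) = (cis (2 * y) + 1) ^ 2 / (4 * cis (2 * y))"
proof -
  define c where "c = complex_of_real (cos y)"
  define s where "s = complex_of_real (sin y)"
  have cs: "c ^ 2 + s ^ 2 = 1" unfolding c_def s_def
    by (metis of_real_add of_real_1 of_real_power sin_cos_squared_add2)
  have e: "cis (2 * y) = (c + \<i> * s) ^ 2" unfolding c_def s_def by (rule cis_double)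
  have "cis (2 * y) + 1 = (c + \<i> * s) * (2 * c)"
    using cs unfolding e by (simp add: algebra_simps power2_eq_square)
  then have "(cis (2 * y) + 1) ^ 2 = 4 * (c + \<i> * s) ^ 2 * c ^ 2"
    by (simp add: algebra_simps power2_eq_square)
  then have "(cis (2 * y) + 1) ^ 2 = 4 * cis (2 * y) * c ^ 2" by (simp only: e)
  moreover have "cis (2 * y) \<noteq> 0" by simp
  ultimately show ?thesis by (simp add: c_def field_simps)
qed

lemma cis_power_divide:
  assumes "p > 0" "q > 0"
  shows "cis (2 * pi * real n / real (p * q)) ^ q = cis (2 * pi / real p) ^ n"
proof -
  have "cis (2 * pi * real n / real (p * q)) ^ q = cis (real q * (2 * pi * real n / real (p * q)))"
    by (rule Complex.DeMoivre)
  also have "real q * (2 * pi * real n / real (p * q)) = real n * (2 * pi / real p)"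
    using assms by (simp add: field_simps)
  finally show ?thesis by (simp add: Complex.DeMoivre)
qed

lemma cot_cot_over_cos_squared_eq_psi:
  assumes "p > 0" "q > 0" "\<not> p dvd n" "\<not> q dvd n"
  defines "z \<equiv> cis (2 * pi * real n / real (p * q))"
  shows "complex_of_real (cot (pi * real n / real p) * cot (pi * real n / real q)
           / (cos (pi * real n / real (p * q)))\<^sup>2) = - cot_ratio (z ^ q) * psi p z"
proof -
  have c1: "cis (2 * (pi * real n / real p)) = z ^ q"
    using cis_power_divide[OF assms(1,2), of n] by (simp add: z_def Complex.DeMoivre algebra_simps)
  have c2: "cis (2 * (pi * real n / real q)) = z ^ p"
    using cis_power_divide[OF assms(2,1), of n]
    by (simp add: z_def Complex.DeMoivre algebra_simps mult.commute)
  have c3: "cis (2 * (pi * real n / real (p * q))) = z"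
    by (simp add: z_def algebra_simps)
  have "z ^ q \<noteq> 1"
    using cis_power_divide[OF assms(1,2), of n] primitive_root_power_eq_1_iff[OF assms(1)] assms(3)
    by (simp add: z_def)
  moreover have "z ^ p \<noteq> 1"
    using cis_power_divide[OF assms(2,1), of n] primitive_root_power_eq_1_iff[OF assms(2)] assms(4)
    by (simp add: z_def mult.commute)
  ultimately have "complex_of_real (cot (pi * real n / real p)) = \<i> * cot_ratio (z ^ q)"
    and "complex_of_real (cot (pi * real n / real q)) = \<i> * cot_ratio (z ^ p)"
    using cot_eq_cot_ratio_cis c1 c2 by auto
  moreover have "complex_of_real ((cos (pi * real n / real (p * q)))\<^sup>2) = (z + 1) ^ 2 / (4 * z)"
    using cos_squared_eq_cis[of "pi * real n / real (p * q)"] c3 by simp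
  moreover have "(\<i> * a) * (\<i> * b) / (c / d) = - a * (b * (d / c))" for a b c d :: complex
    by (simp add: divide_inverse mult_ac)
  ultimately show ?thesis by (simp only: of_real_mult of_real_divide psi_def)
qed

lemma sum_cot_cot_over_cos_squared_eq_unit_roots:
  assumes "coprime p q" "p > 0" "q > 0"
  shows "complex_of_real (\<Sum>n\<in>{n. 1 \<le> n \<and> n \<le> p * q - 1 \<and> \<not> p dvd n \<and> \<not> q dvd n}.
              cot (pi * real n / real p) * cot (pi * real n / real q)
                / (cos (pi * real n / real (p * q)))\<^sup>2)
         = (\<Sum>z\<in>{z\<in>unit_roots (p * q). z ^ q \<noteq> 1 \<and> z ^ p \<noteq> 1}. - cot_ratio (z ^ q) * psi p z)"
proof -
  define N where "N = p * q"
  have N0: "N > 0" using assms by (simp add: N_def)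
  define e where "e n = cis (2 * pi * real n / real N)" for n
  let ?A = "{n. 1 \<le> n \<and> n \<le> p * q - 1 \<and> \<not> p dvd n \<and> \<not> q dvd n}"
  let ?Z = "{z\<in>unit_roots N. z ^ q \<noteq> 1 \<and> z ^ p \<noteq> 1}"
  have e_pow: "e n ^ q = cis (2 * pi / real p) ^ n" "e n ^ p = cis (2 * pi / real q) ^ n" for n
    using cis_power_divide[OF assms(2,3), of n] cis_power_divide[OF assms(3,2), of n]
    by (simp_all add: e_def N_def mult.commute)
  have eq: "e n ^ q = 1 \<longleftrightarrow> p dvd n" "e n ^ p = 1 \<longleftrightarrow> q dvd n" for n
    unfolding e_pow using primitive_root_power_eq_1_iff assms(2,3) by auto
  have A: "?A = {n\<in>{..<N}. \<not> p dvd n \<and> \<not> q dvd n}"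
  proof (rule set_eqI)
    fix n
    show "n \<in> ?A \<longleftrightarrow> n \<in> {n\<in>{..<N}. \<not> p dvd n \<and> \<not> q dvd n}"
      using N0 by (cases "n = 0") (auto simp: N_def)
  qed
  have bij: "bij_betw e {..<N} (unit_roots N)"
    using Complex.bij_betw_roots_unity[OF N0] by (simp add: unit_roots_def e_def[abs_def])
  have img: "e ` ?A = ?Z"
  proof (intro equalityI subsetI)
    fix z assume "z \<in> e ` ?A"
    then obtain n where n: "n \<in> ?A" "z = e n" by auto
    then have "n \<in> {..<N}" using A by auto
    then have "e n \<in> unit_roots N" using bij unfolding bij_betw_def by auto
    then show "z \<in> ?Z" using n eq by auto
  next
    fix z assume z: "z \<in> ?Z"
    then have "z \<in> e ` {..<N}" using bij unfolding bij_betw_def by simp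
    then obtain n where n: "n \<in> {..<N}" "z = e n" by blast
    then have "n \<in> ?A" using z eq A by auto
    then show "z \<in> e ` ?A" using n by auto
  qed
  have bij2: "bij_betw e ?A ?Z"
    by (rule bij_betw_subset[OF bij _ img]) (use A in auto)
  have summand: "complex_of_real (cot (pi * real n / real p) * cot (pi * real n / real q)
      / (cos (pi * real n / real (p * q)))\<^sup>2) = - cot_ratio (e n ^ q) * psi p (e n)"
    if "n \<in> ?A" for n
    using cot_cot_over_cos_squared_eq_psi[OF assms(2,3)] that by (simp add: e_def N_def)
  have "complex_of_real (\<Sum>n\<in>?A. cot (pi * real n / real p) * cot (pi * real n / real q)
                / (cos (pi * real n / real (p * q)))\<^sup>2) = (\<Sum>n\<in>?A. - cot_ratio (e n ^ q) * psi p (e n))"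
    by (simp only: of_real_sum summand cong: sum.cong)
  also have "\<dots> = (\<Sum>z\<in>?Z. - cot_ratio (z ^ q) * psi p z)"
    by (rule sum.reindex_bij_betw[OF bij2])
  finally show ?thesis by (simp add: N_def)
qed

lemma sum_unit_roots_coprime_product:
  assumes "coprime p q" "p > 0" "q > 0"
  shows "(\<Sum>z\<in>{z\<in>unit_roots (p * q). z ^ q \<noteq> 1 \<and> z ^ p \<noteq> 1}. f z)
       = (\<Sum>u\<in>unit_roots p - {1}. \<Sum>v\<in>unit_roots q - {1}. f (u * v))"
proof -
  let ?Z = "{z\<in>unit_roots (p * q). z ^ q \<noteq> 1 \<and> z ^ p \<noteq> 1}"
  have cqp: "coprime q p" using assms(1) by (simp add: coprime_commute)
  have bij: "bij_betw (\<lambda>(u, v). u * v) (unit_roots p \<times> unit_roots q) (unit_roots (p * q))"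
    by (rule bij_betw_mult_unit_roots[OF assms])
  have img: "(\<lambda>(u, v). u * v) ` ((unit_roots p - {1}) \<times> (unit_roots q - {1})) = ?Z"
  proof (intro equalityI subsetI)
    fix z assume "z \<in> (\<lambda>(u, v). u * v) ` ((unit_roots p - {1}) \<times> (unit_roots q - {1}))"
    then obtain x where x: "x \<in> (unit_roots p - {1}) \<times> (unit_roots q - {1})"
      "z = (\<lambda>(u, v). u * v) x" by (rule imageE)
    obtain u v where "x = (u, v)" by (cases x)
    then have z: "z = u * v" and u: "u \<in> unit_roots p" "u \<noteq> 1" and v: "v \<in> unit_roots q" "v \<noteq> 1"
      using x by auto
    have "(u * v) ^ (p * q) = (u ^ p) ^ q * (v ^ q) ^ p"
      by (metis power_mult power_mult_distrib mult.commute)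
    then have "u * v \<in> unit_roots (p * q)" using u v by simp
    moreover have "(u * v) ^ q \<noteq> 1"
      using unit_roots_coprime_eq_1[OF assms(1,2), of u] u v by (auto simp: power_mult_distrib)
    moreover have "(u * v) ^ p \<noteq> 1"
      using unit_roots_coprime_eq_1[OF cqp assms(3), of v] u v by (auto simp: power_mult_distrib)
    ultimately show "z \<in> ?Z" using z by simp
  next
    fix z assume z: "z \<in> ?Z"
    then obtain u v where uv: "u \<in> unit_roots p" "v \<in> unit_roots q" "z = u * v"
      using bij unfolding bij_betw_def by force
    moreover have "u \<noteq> 1" "v \<noteq> 1" using z uv by (auto simp: power_mult_distrib)
    ultimately show "z \<in> (\<lambda>(u, v). u * v) ` ((unit_roots p - {1}) \<times> (unit_roots q - {1}))"
      by force
  qed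
  have "bij_betw (\<lambda>(u, v). u * v) ((unit_roots p - {1}) \<times> (unit_roots q - {1})) ?Z"
    by (rule bij_betw_subset[OF bij _ img]) auto
  then have "(\<Sum>z\<in>?Z. f z)
      = (\<Sum>x\<in>(unit_roots p - {1}) \<times> (unit_roots q - {1}). f (case x of (u, v) \<Rightarrow> u * v))"
    by (rule sum.reindex_bij_betw[symmetric])
  then show ?thesis by (simp add: sum.cartesian_product case_prod_unfold)
qed

section \<open>Partial fractions and resolvent sums\<close>

definition psi_coeff :: "complex \<Rightarrow> complex" where
  "psi_coeff w = w ^ 2 / (w + 1) ^ 2"

lemma sum_unit_roots_psi_coeff:
  assumes "odd p"
  shows "(\<Sum>w\<in>unit_roots p. psi_coeff w) = of_nat p * (2 - of_nat p) / 4"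
proof -
  have p0: "p > 0" using assms by (cases p) auto
  have "(\<Sum>w\<in>unit_roots p. psi_coeff w)
      = (\<Sum>w\<in>unit_roots p. 1 - 2 * (1 / (w + 1)) + 1 / (w + 1) ^ 2)"
  proof (rule sum.cong[OF refl])
    fix w assume w: "w \<in> unit_roots p"
    define i1 where "i1 = 1 / (w + 1)"
    have "i1 * (w + 1) = 1" using unit_roots_odd_plus_one_nonzero[OF assms w] by (simp add: i1_def)
    then have "w ^ 2 * i1 ^ 2 = 1 - 2 * i1 + i1 ^ 2" by algebra
    then show "psi_coeff w = 1 - 2 * (1 / (w + 1)) + 1 / (w + 1) ^ 2"
      by (simp add: psi_coeff_def i1_def power2_eq_square)
  qed
  also have "\<dots> = (\<Sum>w\<in>unit_roots p. 1) - 2 * (\<Sum>w\<in>unit_roots p. 1 / (w + 1))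
      + (\<Sum>w\<in>unit_roots p. 1 / (w + 1) ^ 2)"
    by (simp only: sum.distrib sum_subtractf sum_distrib_left)
  also have "\<dots> = of_nat p - 2 * (of_nat p / 2) + of_nat p * (2 - of_nat p) / 4"
    unfolding sum_unit_roots_inverse_plus_one[OF assms] sum_unit_roots_inverse_plus_one_squared[OF assms]
    using p0 by (simp add: card_unit_roots)
  finally show ?thesis by simp
qed

lemma sum_unit_roots_over_one_plus:
  assumes "odd p"
  shows "(\<Sum>w\<in>unit_roots p. w / (1 + w)) = of_nat p / 2"
proof -
  have p0: "p > 0" using assms by (cases p) auto
  have "(\<Sum>w\<in>unit_roots p. w / (1 + w)) = (\<Sum>w\<in>unit_roots p. 1 - 1 / (w + 1))"
  proof (rule sum.cong[OF refl])
    fix w assume w: "w \<in> unit_roots p"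
    have "w + 1 \<noteq> 0" using unit_roots_odd_plus_one_nonzero[OF assms w] .
    then show "w / (1 + w) = 1 - 1 / (w + 1)" by (simp add: field_simps)
  qed
  also have "\<dots> = of_nat p - of_nat p / 2"
    unfolding sum_subtractf sum_unit_roots_inverse_plus_one[OF assms] using p0 by (simp add: card_unit_roots)
  finally show ?thesis by simp
qed

lemma psi_partial_fractions:
  assumes "odd p" "z ^ p \<noteq> 1" "z \<noteq> -1"
  shows "psi p z = 8 / of_nat p * (\<Sum>w\<in>unit_roots p. psi_coeff w / (z - w)) + 2 * of_nat p / (z + 1)"
proof -
  have p0: "p > 0" using assms by (cases p) auto
  have z1: "z + 1 \<noteq> 0" using assms(3) by (metis eq_neg_iff_add_eq_0)
  have pf: "psi_coeff w / (z - w)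
      = w * z / ((z - w) * (z + 1) ^ 2) + psi_coeff w / (z + 1) - w / (1 + w) / (z + 1) ^ 2"
    if w: "w \<in> unit_roots p" for w
  proof -
    have w1: "w + 1 \<noteq> 0" using unit_roots_odd_plus_one_nonzero[OF assms(1) w] .
    have zw: "z - w \<noteq> 0" using w assms by auto
    define i1 where "i1 = 1 / (w + 1)"
    define i2 where "i2 = 1 / (z + 1)"
    define i3 where "i3 = 1 / (z - w)"
    have h: "i1 * (w + 1) = 1" "i2 * (z + 1) = 1" "i3 * (z - w) = 1"
      using w1 z1 zw by (simp_all add: i1_def i2_def i3_def)
    have "w ^ 2 * i1 ^ 2 * i3 = w * z * i3 * i2 ^ 2 + w ^ 2 * i1 ^ 2 * i2 - w * i1 * i2 ^ 2"
      using h by algebra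
    then show ?thesis
      by (simp add: psi_coeff_def i1_def i2_def i3_def power2_eq_square add.commute)
  qed
  have "(\<Sum>w\<in>unit_roots p. psi_coeff w / (z - w)) =
      z / (z + 1) ^ 2 * (\<Sum>w\<in>unit_roots p. w / (z - w)) + (\<Sum>w\<in>unit_roots p. psi_coeff w) / (z + 1)
      - (\<Sum>w\<in>unit_roots p. w / (1 + w)) / (z + 1) ^ 2"
    by (simp add: pf sum.distrib sum_subtractf sum_distrib_left sum_divide_distrib mult_ac)
  also have "\<dots> = z / (z + 1) ^ 2 * (of_nat p / (z ^ p - 1)) + of_nat p * (2 - of_nat p) / 4 / (z + 1)
      - of_nat p / 2 / (z + 1) ^ 2"
    using assms p0
    by (simp add: sum_unit_roots_root_over_diff sum_unit_roots_psi_coeff sum_unit_roots_over_one_plus)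
  finally have S: "(\<Sum>w\<in>unit_roots p. psi_coeff w / (z - w)) = \<dots>" .
  define X where "X = z ^ p"
  define iX where "iX = 1 / (X - 1)"
  define i2 where "i2 = 1 / (z + 1)"
  define iP where "iP = 1 / (of_nat p :: complex)"
  have h: "iX * (X - 1) = 1" "i2 * (z + 1) = 1" "iP * of_nat p = 1"
    using assms z1 p0 by (simp_all add: iX_def X_def i2_def iP_def)
  have L: "psi p z = (X + 1) * iX * (4 * z * i2 ^ 2)"
    by (simp add: psi_def cot_ratio_def X_def iX_def i2_def power2_eq_square)
  have R: "8 / of_nat p * (z / (z + 1) ^ 2 * (of_nat p / (z ^ p - 1))
        + of_nat p * (2 - of_nat p) / 4 / (z + 1) - of_nat p / 2 / (z + 1) ^ 2) + 2 * of_nat p / (z + 1)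
     = 8 * iP * (z * i2 ^ 2 * (of_nat p * iX) + of_nat p * (2 - of_nat p) / 4 * i2 - of_nat p / 2 * i2 ^ 2)
       + 2 * of_nat p * i2"
    by (simp add: X_def iX_def i2_def iP_def power2_eq_square)
  show ?thesis unfolding S L R using h by algebra
qed
lemma sum_unit_roots_inverse_scaled_diff:
  assumes "q > 0" "u \<noteq> 0" "z ^ q \<noteq> u ^ q"
  shows "(\<Sum>v\<in>unit_roots q. 1 / (u * v - z)) = - of_nat q * z ^ (q - 1) / (z ^ q - u ^ q)"
proof -
  define x where "x = z / u"
  have xq: "x ^ q \<noteq> 1" using assms by (simp add: x_def power_divide)
  have "(\<Sum>v\<in>unit_roots q. 1 / (u * v - z)) = - (\<Sum>v\<in>unit_roots q. 1 / (x - v)) / u"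
    unfolding sum_negf[symmetric] sum_divide_distrib
  proof (intro sum.cong refl)
    fix v
    have "u * (v - x) = u * v - z" using assms(2) by (simp add: x_def algebra_simps)
    then have "1 / (u * v - z) = 1 / (v - x) / u" by (simp add: mult.commute)
    then show "1 / (u * v - z) = - (1 / (x - v)) / u"
      by (simp add: divide_minus_right[symmetric])
  qed
  also have "\<dots> = - of_nat q * z ^ (q - 1) / (z ^ q - u ^ q)"
  proof -
    obtain n where n: "q = Suc n" using assms by (cases q) auto
    have "z ^ q - u ^ q \<noteq> 0" using assms by simp
    then show ?thesis unfolding sum_unit_roots_inverse_diff[OF assms(1) xq]
      using assms(2) by (simp add: x_def n power_divide field_simps)
  qed
  finally show ?thesis .
qed

lemma sum_nontrivial_unit_roots_inverse_scaled_diff: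
  assumes "coprime p q" "p > 0" "q > 0" "u \<in> unit_roots p" "w \<in> unit_roots p"
  shows "(\<Sum>v\<in>unit_roots q - {1}. 1 / (u * v - w)) =
    (if w = u then - (of_nat q - 1) / (2 * u)
     else - of_nat q * w ^ (q - 1) / (w ^ q - u ^ q) - 1 / (u - w))"
proof (cases "w = u")
  case True
  have u0: "u \<noteq> 0" using unit_roots_nonzero[OF assms(2,4)] .
  have "(\<Sum>v\<in>unit_roots q - {1}. 1 / (u * v - w))
      = - (1 / u) * (\<Sum>v\<in>unit_roots q - {1}. 1 / (1 - v))"
    unfolding sum_distrib_left
  proof (rule sum.cong[OF refl])
    fix v assume "v \<in> unit_roots q - {1}"
    then have "1 - v \<noteq> 0" by auto
    then show "1 / (u * v - w) = - (1 / u) * (1 / (1 - v))" using True u0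
      by (simp add: field_simps)
  qed
  then show ?thesis
    using True u0 by (simp add: sum_unit_roots_inverse_one_minus[OF assms(3)] field_simps)
next
  case False
  have "w ^ q \<noteq> u ^ q"
    using bij_betw_power_unit_roots[OF assms(1,2)] assms(4,5) False
    unfolding bij_betw_def inj_on_def by metis
  then have "(\<Sum>v\<in>unit_roots q. 1 / (u * v - w)) = - of_nat q * w ^ (q - 1) / (w ^ q - u ^ q)"
    using sum_unit_roots_inverse_scaled_diff[OF assms(3) unit_roots_nonzero[OF assms(2,4)]] by blast
  moreover have "(\<Sum>v\<in>unit_roots q - {1}. 1 / (u * v - w))
      = (\<Sum>v\<in>unit_roots q. 1 / (u * v - w)) - 1 / (u * 1 - w)"
    using assms(3) by (simp add: sum_diff1)
  ultimately show ?thesis using False by simp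
qed

lemma sum_nontrivial_unit_roots_inverse_scaled_plus_one:
  assumes "odd p" "odd q" "u \<in> unit_roots p"
  shows "(\<Sum>v\<in>unit_roots q - {1}. 1 / (u * v + 1)) = of_nat q / (1 + u ^ q) - 1 / (u + 1)"
proof -
  have q0: "q > 0" and p0: "p > 0" using assms by (auto intro!: odd_pos)
  have uq: "u ^ q \<noteq> -1"
  proof
    assume "u ^ q = -1"
    moreover have "(u ^ q) ^ p = (u ^ p) ^ q" by (simp add: power_mult[symmetric] mult.commute)
    ultimately have "(-1::complex) ^ p = 1" using assms(3) by simp
    with assms(1) show False by simp
  qed
  then have ne: "(-1) ^ q \<noteq> u ^ q" using assms(2) by simp
  have "(\<Sum>v\<in>unit_roots q - {1}. 1 / (u * v + 1))
      = (\<Sum>v\<in>unit_roots q. 1 / (u * v - (-1))) - 1 / (u * 1 - (-1))"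
    using q0 by (simp add: sum_diff1)
  also have "\<dots> = - of_nat q * (-1) ^ (q - 1) / ((-1) ^ q - u ^ q) - 1 / (u + 1)"
    by (simp only: sum_unit_roots_inverse_scaled_diff[OF q0 unit_roots_nonzero[OF p0 assms(3)] ne]) simp
  also have "(-1::complex) ^ (q - 1) = 1" using assms(2) q0 by (simp add: neg_one_even_power)
  also have "(-1::complex) ^ q = -1" using assms(2) by simp
  finally have "(\<Sum>v\<in>unit_roots q - {1}. 1 / (u * v + 1))
      = - of_nat q * 1 / (- 1 - u ^ q) - 1 / (u + 1)" .
  moreover have "- of_nat q * 1 / (- 1 - u ^ q) = of_nat q / (1 + u ^ q)"
    by (simp add: minus_diff_eq[of "u ^ q" "-1", symmetric] divide_minus_right[symmetric])
  ultimately show ?thesis by simp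
qed

definition psi_coeff_resolvent :: "complex \<Rightarrow> complex \<Rightarrow> complex" where
  "psi_coeff_resolvent P u = (let a = 1 / (u + 1) in
     (1 - a) ^ 2 * (P - 1) / (2 * u) + (a ^ 2 - 2 * a) * (P / 2 - a) + a * (P * (2 - P) / 4 - a ^ 2))"

lemma sum_psi_coeff_over_diff:
  assumes "odd p" "u \<in> unit_roots p"
  shows "(\<Sum>w\<in>unit_roots p - {u}. psi_coeff w / (u - w)) = psi_coeff_resolvent (of_nat p) u"
proof -
  have p0: "p > 0" using assms by (cases p) auto
  define a where "a = 1 / (u + 1)"
  have ha: "a * (u + 1) = 1" using unit_roots_odd_plus_one_nonzero[OF assms] by (simp add: a_def)
  have pt: "psi_coeff w / (u - w)
      = (1 - a) ^ 2 * (1 / (u - w)) + (a ^ 2 - 2 * a) * (1 / (w + 1)) + a * (1 / (w + 1) ^ 2)"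
    if w: "w \<in> unit_roots p - {u}" for w
  proof -
    define i1 where "i1 = 1 / (w + 1)"
    define d where "d = 1 / (u - w)"
    have "i1 * (w + 1) = 1" "d * (u - w) = 1"
      using unit_roots_odd_plus_one_nonzero[OF assms(1)] w by (auto simp: i1_def d_def)
    then have "w ^ 2 * i1 ^ 2 * d = (1 - a) ^ 2 * d + (a ^ 2 - 2 * a) * i1 + a * i1 ^ 2"
      using ha by algebra
    then show ?thesis by (simp add: psi_coeff_def i1_def d_def power2_eq_square power_one_over)
  qed
  have "(\<Sum>w\<in>unit_roots p - {u}. psi_coeff w / (u - w))
      = (1 - a) ^ 2 * (\<Sum>w\<in>unit_roots p - {u}. 1 / (u - w))
        + (a ^ 2 - 2 * a) * (\<Sum>w\<in>unit_roots p - {u}. 1 / (w + 1))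
        + a * (\<Sum>w\<in>unit_roots p - {u}. 1 / (w + 1) ^ 2)"
    by (simp only: pt sum.distrib sum_distrib_left cong: sum.cong)
  also have "(\<Sum>w\<in>unit_roots p - {u}. 1 / (u - w)) = (of_nat p - 1) / (2 * u)"
    by (rule sum_unit_roots_inverse_diff_root[OF p0 assms(2)])
  also have "(\<Sum>w\<in>unit_roots p - {u}. 1 / (w + 1)) = of_nat p / 2 - a"
    using p0 assms by (simp add: sum_diff1 sum_unit_roots_inverse_plus_one a_def)
  also have "(\<Sum>w\<in>unit_roots p - {u}. 1 / (w + 1) ^ 2) = of_nat p * (2 - of_nat p) / 4 - a ^ 2"
    using p0 assms
    by (simp add: sum_diff1 sum_unit_roots_inverse_plus_one_squared a_def power_one_over)
  finally show ?thesis by (simp add: psi_coeff_resolvent_def a_def[symmetric] Let_def)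
qed

definition twisted_resolvent :: "nat \<Rightarrow> nat \<Rightarrow> complex \<Rightarrow> complex" where
  "twisted_resolvent p q u =
     (\<Sum>w\<in>unit_roots p - {u}. psi_coeff w * (- of_nat q * w ^ (q - 1) / (w ^ q - u ^ q)))"

lemma sum_psi_over_coset:
  assumes "odd p" "odd q" "coprime p q" "u \<in> unit_roots p"
  shows "(\<Sum>v\<in>unit_roots q - {1}. psi p (u * v)) =
    8 / of_nat p * (twisted_resolvent p q u - psi_coeff_resolvent (of_nat p) u
                    + psi_coeff u * (- (of_nat q - 1) / (2 * u)))
    + 2 * of_nat p * (of_nat q / (1 + u ^ q) - 1 / (u + 1))"
proof -
  have p0: "p > 0" and q0: "q > 0" using assms by (auto intro!: odd_pos)
  have cqp: "coprime q p" using assms(3) by (simp add: coprime_commute)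
  have pt: "psi p (u * v) = 8 / of_nat p * (\<Sum>w\<in>unit_roots p. psi_coeff w * (1 / (u * v - w)))
      + 2 * of_nat p * (1 / (u * v + 1))"
    if v: "v \<in> unit_roots q - {1}" for v
  proof -
    have vp: "v ^ p \<noteq> 1" using unit_roots_coprime_eq_1[OF cqp q0, of v] v by auto
    have uvp: "(u * v) ^ p = v ^ p" using assms(4) by (simp add: power_mult_distrib)
    have "u * v \<noteq> -1"
    proof
      assume "u * v = -1"
      then have "v ^ p = -1" using uvp assms(1) by simp
      then have "(v ^ p) ^ q = -1" using assms(2) by simp
      moreover have "(v ^ p) ^ q = 1" using v by (metis power_mult mult.commute mem_unit_roots DiffD1 power_one)
      ultimately show False by simp
    qed
    then show ?thesis using psi_partial_fractions[OF assms(1)] vp uvp by simp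
  qed
  have "(\<Sum>v\<in>unit_roots q - {1}. psi p (u * v)) =
      8 / of_nat p * (\<Sum>w\<in>unit_roots p. psi_coeff w * (\<Sum>v\<in>unit_roots q - {1}. 1 / (u * v - w)))
      + 2 * of_nat p * (\<Sum>v\<in>unit_roots q - {1}. 1 / (u * v + 1))"
  proof -
    have "(\<Sum>v\<in>unit_roots q - {1}. \<Sum>w\<in>unit_roots p. psi_coeff w * (1 / (u * v - w)))
        = (\<Sum>w\<in>unit_roots p. psi_coeff w * (\<Sum>v\<in>unit_roots q - {1}. 1 / (u * v - w)))"
      by (subst sum.swap) (simp only: sum_distrib_left)
    then show ?thesis
      by (simp only: pt sum.distrib sum_distrib_left[symmetric] cong: sum.cong)
  qed
  also have "(\<Sum>v\<in>unit_roots q - {1}. 1 / (u * v + 1)) = of_nat q / (1 + u ^ q) - 1 / (u + 1)"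
    by (rule sum_nontrivial_unit_roots_inverse_scaled_plus_one[OF assms(1,2,4)])
  also have "(\<Sum>w\<in>unit_roots p. psi_coeff w * (\<Sum>v\<in>unit_roots q - {1}. 1 / (u * v - w)))
      = psi_coeff u * (- (of_nat q - 1) / (2 * u))
        + (\<Sum>w\<in>unit_roots p - {u}. psi_coeff w
             * (- of_nat q * w ^ (q - 1) / (w ^ q - u ^ q) - 1 / (u - w)))"
    using sum_nontrivial_unit_roots_inverse_scaled_diff[OF assms(3) p0 q0 assms(4)] p0 assms(4)
    by (simp add: sum.remove)
  also have "(\<Sum>w\<in>unit_roots p - {u}. psi_coeff w
             * (- of_nat q * w ^ (q - 1) / (w ^ q - u ^ q) - 1 / (u - w)))
      = twisted_resolvent p q u - psi_coeff_resolvent (of_nat p) u"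
    unfolding twisted_resolvent_def sum_psi_coeff_over_diff[OF assms(1,4), symmetric]
    by (simp add: right_diff_distrib sum_subtractf)
  finally show ?thesis by (simp add: algebra_simps)
qed

definition cot_ratio_resolvent :: "complex \<Rightarrow> complex \<Rightarrow> complex" where
  "cot_ratio_resolvent P B = (if B = 1 then (P - 1) / 2 - (P - 1) * (5 - P) / 6
     else 2 / (B - 1) * (- (P - 1) / 2 - 1 / (B - 1))
          + (B + 1) / (B - 1) * ((P - 1) / (2 * B) - 1 / (B - 1)))"

lemma sum_cot_ratio_over_diff:
  assumes "p > 0" "B \<in> unit_roots p"
  shows "(\<Sum>U\<in>unit_roots p - {1} - {B}. cot_ratio U / (B - U)) = cot_ratio_resolvent (of_nat p) B"
proof (cases "B = 1")
  case True
  have "(\<Sum>U\<in>unit_roots p - {1} - {B}. cot_ratio U / (B - U))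
      = (\<Sum>U\<in>unit_roots p - {1}. - (1 / (U - 1)) - 2 * (1 / (U - 1) ^ 2))"
  proof (rule sum.cong)
    fix U assume "U \<in> unit_roots p - {1}"
    then have "U - 1 \<noteq> 0" by auto
    define i where "i = 1 / (U - 1)"
    have "i * (U - 1) = 1" using \<open>U - 1 \<noteq> 0\<close> by (simp add: i_def)
    then have "(U + 1) * i * (- i) = - i - 2 * i ^ 2" by algebra
    moreover have "1 / (1 - U) = - i" unfolding i_def by (metis minus_diff_eq divide_minus_right)
    moreover have "cot_ratio U / (B - U) = (U + 1) * i * (1 / (1 - U))"
      using True by (simp add: cot_ratio_def i_def)
    ultimately show "cot_ratio U / (B - U) = - (1 / (U - 1)) - 2 * (1 / (U - 1) ^ 2)"
      by (simp add: i_def power2_eq_square)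
  qed (use True in auto)
  also have "\<dots> = - (\<Sum>U\<in>unit_roots p - {1}. 1 / (U - 1))
      - 2 * (\<Sum>U\<in>unit_roots p - {1}. 1 / (U - 1) ^ 2)"
    by (simp only: sum_subtractf sum_negf sum_distrib_left)
  also have "\<dots> = cot_ratio_resolvent (of_nat p) B"
    unfolding sum_unit_roots_inverse_minus_one[OF assms(1)]
      sum_unit_roots_inverse_minus_one_squared[OF assms(1)]
    using True by (simp add: cot_ratio_resolvent_def field_simps)
  finally show ?thesis .
next
  case False
  have B1: "B - 1 \<noteq> 0" using False by simp
  have "(\<Sum>U\<in>unit_roots p - {1} - {B}. cot_ratio U / (B - U))
      = (\<Sum>U\<in>unit_roots p - {1} - {B}. 2 / (B - 1) * (1 / (U - 1)) + (B + 1) / (B - 1) * (1 / (B - U)))"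
  proof (rule sum.cong[OF refl])
    fix U assume "U \<in> unit_roots p - {1} - {B}"
    then have "U - 1 \<noteq> 0" "B - U \<noteq> 0" by auto
    define i where "i = 1 / (U - 1)"
    define j where "j = 1 / (B - U)"
    define k where "k = 1 / (B - 1)"
    have "i * (U - 1) = 1" "j * (B - U) = 1" "k * (B - 1) = 1"
      using \<open>U - 1 \<noteq> 0\<close> \<open>B - U \<noteq> 0\<close> B1 by (simp_all add: i_def j_def k_def)
    then have "(U + 1) * i * j = 2 * k * i + (B + 1) * k * j" by algebra
    then show "cot_ratio U / (B - U) = 2 / (B - 1) * (1 / (U - 1)) + (B + 1) / (B - 1) * (1 / (B - U))"
      by (simp add: cot_ratio_def i_def j_def k_def)
  qed
  also have "\<dots> = 2 / (B - 1) * (\<Sum>U\<in>unit_roots p - {1} - {B}. 1 / (U - 1))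
      + (B + 1) / (B - 1) * (\<Sum>U\<in>unit_roots p - {1} - {B}. 1 / (B - U))"
    by (simp only: sum.distrib sum_distrib_left)
  also have "(\<Sum>U\<in>unit_roots p - {1} - {B}. 1 / (U - 1)) = - (of_nat p - 1) / 2 - 1 / (B - 1)"
    using assms False sum_unit_roots_inverse_minus_one[OF assms(1)] by (simp add: sum_diff1)
  also have "(\<Sum>U\<in>unit_roots p - {1} - {B}. 1 / (B - U)) = (of_nat p - 1) / (2 * B) - 1 / (B - 1)"
  proof -
    have "unit_roots p - {1} - {B} = unit_roots p - {B} - {1}" by auto
    then show ?thesis
      using assms False sum_unit_roots_inverse_diff_root[OF assms] by (simp add: sum_diff1)
  qed
  finally show ?thesis using False by (simp add: cot_ratio_resolvent_def)
qed

lemma sum_cot_ratio_times_twisted_resolvent: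
  assumes "odd p" "coprime p q"
  shows "(\<Sum>u\<in>unit_roots p - {1}. cot_ratio (u ^ q) * twisted_resolvent p q u) =
    (\<Sum>w\<in>unit_roots p. psi_coeff w * (- of_nat q * w ^ (q - 1))
                         * cot_ratio_resolvent (of_nat p) (w ^ q))"
proof -
  have p0: "p > 0" using assms by (auto intro!: odd_pos)
  let ?c = "\<lambda>w. psi_coeff w * (- of_nat q * w ^ (q - 1))"
  have "(\<Sum>u\<in>unit_roots p - {1}. cot_ratio (u ^ q) * twisted_resolvent p q u) =
      (\<Sum>u\<in>unit_roots p - {1}. \<Sum>w\<in>{w. w \<in> unit_roots p \<and> u \<noteq> w}.
         ?c w * (cot_ratio (u ^ q) / (w ^ q - u ^ q)))"
  proof (rule sum.cong[OF refl])
    fix u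
    have "{w. w \<in> unit_roots p \<and> u \<noteq> w} = unit_roots p - {u}" by auto
    then show "cot_ratio (u ^ q) * twisted_resolvent p q u
        = (\<Sum>w\<in>{w. w \<in> unit_roots p \<and> u \<noteq> w}. ?c w * (cot_ratio (u ^ q) / (w ^ q - u ^ q)))"
      unfolding twisted_resolvent_def by (simp add: sum_distrib_left mult_ac)
  qed
  also have "\<dots> = (\<Sum>w\<in>unit_roots p. \<Sum>u\<in>{u. u \<in> unit_roots p - {1} \<and> u \<noteq> w}.
         ?c w * (cot_ratio (u ^ q) / (w ^ q - u ^ q)))"
    by (rule sum.swap_restrict) (use p0 in auto)
  also have "\<dots> = (\<Sum>w\<in>unit_roots p. ?c w * cot_ratio_resolvent (of_nat p) (w ^ q))"
  proof (rule sum.cong[OF refl])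
    fix w assume w: "w \<in> unit_roots p"
    have bij: "bij_betw (\<lambda>u. u ^ q) (unit_roots p) (unit_roots p)"
      by (rule bij_betw_power_unit_roots[OF assms(2) p0])
    have "(\<lambda>u. u ^ q) ` (unit_roots p - {1, w}) = (\<lambda>u. u ^ q) ` unit_roots p - (\<lambda>u. u ^ q) ` {1, w}"
      using bij w by (intro inj_on_image_set_diff) (auto simp: bij_betw_def)
    also have "\<dots> = unit_roots p - {1, w ^ q}" using bij by (simp add: bij_betw_def)
    finally have img: "(\<lambda>u. u ^ q) ` (unit_roots p - {1, w}) = unit_roots p - {1, w ^ q}" .
    have bij2: "bij_betw (\<lambda>u. u ^ q) (unit_roots p - {1, w}) (unit_roots p - {1, w ^ q})"
      by (rule bij_betw_subset[OF bij _ img]) auto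
    have "w ^ q \<in> unit_roots p" using w by (rule power_mem_unit_roots)
    have "(\<Sum>u\<in>{u. u \<in> unit_roots p - {1} \<and> u \<noteq> w}. cot_ratio (u ^ q) / (w ^ q - u ^ q))
        = (\<Sum>u\<in>unit_roots p - {1, w}. cot_ratio (u ^ q) / (w ^ q - u ^ q))"
      by (rule sum.cong) auto
    also have "\<dots> = (\<Sum>U\<in>unit_roots p - {1, w ^ q}. cot_ratio U / (w ^ q - U))"
      by (rule sum.reindex_bij_betw[OF bij2])
    also have "\<dots> = (\<Sum>U\<in>unit_roots p - {1} - {w ^ q}. cot_ratio U / (w ^ q - U))"
      by (rule sum.cong) auto
    also have "\<dots> = cot_ratio_resolvent (of_nat p) (w ^ q)"
      by (rule sum_cot_ratio_over_diff[OF p0 \<open>w ^ q \<in> unit_roots p\<close>])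
    finally show "(\<Sum>u\<in>{u. u \<in> unit_roots p - {1} \<and> u \<noteq> w}.
          ?c w * (cot_ratio (u ^ q) / (w ^ q - u ^ q))) = ?c w * cot_ratio_resolvent (of_nat p) (w ^ q)"
      by (simp only: sum_distrib_left[symmetric])
  qed
  finally show ?thesis .
qed

(* psi_coeff_resolvent in the variable a = 1/(u + 1), using 1/u = a/(1 - a) *)
section \<open>The reflection u \<mapsto> 1/u\<close>

definition psi_coeff_resolvent_a :: "complex \<Rightarrow> complex \<Rightarrow> complex" where
  "psi_coeff_resolvent_a P a = (let ub = a / (1 - a) in
     (P - 1) * ub / 2 - 2 * a * (P / 2 - a + (P - 1) * ub / 2)
     + a * (P * (2 - P) / 4 - 2 * a ^ 2 + a * P / 2 + a * (P - 1) * ub / 2))"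

definition alpha :: "complex \<Rightarrow> complex \<Rightarrow> complex \<Rightarrow> complex" where
  "alpha P Q a = 8 / P * psi_coeff_resolvent_a P a + 4 * (Q - 1) / P * a * (1 - a) + 2 * P * a
     - 4 * Q * (P + 1) / P * a * (1 - a)"

definition beta :: "complex \<Rightarrow> complex \<Rightarrow> complex \<Rightarrow> complex" where
  "beta P Q a = 16 / P * psi_coeff_resolvent_a P a + 8 * (Q - 1) / P * a * (1 - a) - 2 * P * Q
     + 4 * P * a - 40 * Q / P * a * (1 - a) - 32 / P * a ^ 2 * (1 - a)"

lemma beta_reflect:
  assumes "P \<noteq> 0" "a \<noteq> 0" "a \<noteq> 1"
  shows "beta P Q (1 - a) = beta P Q a"
proof -
  define t s v where "t = 1 / (1 - a)" and "s = 1 / a" and "v = 1 / P"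
  have h: "t * (1 - a) = 1" "s * a = 1" "v * P = 1" using assms by (simp_all add: t_def s_def v_def)
  have e: "a / (1 - a) = a * t" "(1 - a) / (1 - (1 - a)) = (1 - a) * s" "\<And>x. x / P = x * v"
    by (simp_all add: t_def s_def v_def)
  show ?thesis using h unfolding beta_def psi_coeff_resolvent_a_def Let_def e by algebra
qed

lemma alpha_add_reflect:
  assumes "P \<noteq> 0" "a \<noteq> 0" "a \<noteq> 1"
  shows "alpha P Q a + alpha P Q (1 - a) - beta P Q a
       = (8 * Q * (4 - P) + 16) / P * a * (1 - a) + 2 * P * Q"
proof -
  define t s v where "t = 1 / (1 - a)" and "s = 1 / a" and "v = 1 / P"
  have h: "t * (1 - a) = 1" "s * a = 1" "v * P = 1" using assms by (simp_all add: t_def s_def v_def)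
  have e: "a / (1 - a) = a * t" "(1 - a) / (1 - (1 - a)) = (1 - a) * s" "\<And>x. x / P = x * v"
    by (simp_all add: t_def s_def v_def)
  show ?thesis using h unfolding alpha_def beta_def psi_coeff_resolvent_a_def Let_def e by algebra
qed

definition diagonal_term :: "complex \<Rightarrow> complex \<Rightarrow> complex \<Rightarrow> complex \<Rightarrow> complex" where
  "diagonal_term P Q u U = - cot_ratio U * (8 / P * (- psi_coeff_resolvent P u
     + psi_coeff u * (- (Q - 1) / (2 * u))) + 2 * P * (Q / (1 + U) - 1 / (u + 1)))"

definition off_diagonal_term :: "complex \<Rightarrow> complex \<Rightarrow> complex \<Rightarrow> complex \<Rightarrow> complex" where
  "off_diagonal_term P Q u U = psi_coeff u * (- Q * (U / u)) * cot_ratio_resolvent P U"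

definition rhs_summand :: "complex \<Rightarrow> complex \<Rightarrow> complex \<Rightarrow> complex \<Rightarrow> complex" where
  "rhs_summand P Q u U = 32 / P * (u / ((u + 1) ^ 3 * (U - 1)))
     - 32 * Q / P * (u / ((u + 1) ^ 2 * (U - 1) ^ 2))"

lemma diagonal_off_diagonal_decomposition:
  assumes "P \<noteq> 0" "u \<noteq> 0" "u + 1 \<noteq> 0" "U \<noteq> 0" "U \<noteq> 1" "U + 1 \<noteq> 0"
  shows "diagonal_term P Q u U - 8 / P * off_diagonal_term P Q u U - rhs_summand P Q u U
       = alpha P Q (1 / (u + 1)) + beta P Q (1 / (u + 1)) * (1 / (U - 1))"
proof -
  define a iu W iV iU iP
    where "a = 1 / (u + 1)" and "iu = 1 / u" and "W = 1 / (U - 1)" and "iV = 1 / (U + 1)"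
      and "iU = 1 / U" and "iP = 1 / P"
  have h: "a * (u + 1) = 1" "iu * u = 1" "W * (U - 1) = 1" "iV * (U + 1) = 1" "iU * U = 1" "iP * P = 1"
    using assms by (simp_all add: a_def iu_def W_def iV_def iU_def iP_def)
  have dP: "\<And>x. x / P = x * iP" by (simp add: iP_def)
  have L: "diagonal_term P Q u U - 8 / P * off_diagonal_term P Q u U - rhs_summand P Q u U =
       - ((U + 1) * W) * (8 * iP * (- ((1 - a) ^ 2 * (P - 1) * iu / 2 + (a ^ 2 - 2 * a) * (P / 2 - a)
            + a * (P * (2 - P) / 4 - a ^ 2)) + u ^ 2 * a ^ 2 * (- (Q - 1) * iu / 2)) + 2 * P * (Q * iV - a))
       - 8 * iP * (u ^ 2 * a ^ 2 * (- Q * (U * iu))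
            * (2 * W * (- (P - 1) / 2 - W) + (U + 1) * W * ((P - 1) * iU / 2 - W)))
       - (32 * iP * (u * a ^ 3 * W) - 32 * Q * iP * (u * a ^ 2 * W ^ 2))"
  proof -
    have e: "cot_ratio U = (U + 1) * W" "psi_coeff u = u ^ 2 * a ^ 2"
      "psi_coeff_resolvent P u = (1 - a) ^ 2 * (P - 1) * iu / 2 + (a ^ 2 - 2 * a) * (P / 2 - a)
         + a * (P * (2 - P) / 4 - a ^ 2)"
      "- (Q - 1) / (2 * u) = - (Q - 1) * iu / 2" "Q / (1 + U) = Q * iV" "U / u = U * iu"
      "cot_ratio_resolvent P U = 2 * W * (- (P - 1) / 2 - W) + (U + 1) * W * ((P - 1) * iU / 2 - W)"
      "rhs_summand P Q u U = 32 * iP * (u * a ^ 3 * W) - 32 * Q * iP * (u * a ^ 2 * W ^ 2)"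
      using assms
      by (simp_all add: cot_ratio_def psi_coeff_def psi_coeff_resolvent_def cot_ratio_resolvent_def
          rhs_summand_def a_def iu_def W_def iV_def iU_def iP_def power_one_over Let_def add.commute)
    show ?thesis unfolding diagonal_term_def off_diagonal_term_def e a_def[symmetric] dP ..
  qed
  have "a / (1 - a) = iu" unfolding a_def iu_def using assms(2,3) by (simp add: field_simps)
  then have R: "alpha P Q (1 / (u + 1)) + beta P Q (1 / (u + 1)) * (1 / (U - 1)) =
      (8 * iP * ((P - 1) * iu / 2 - 2 * a * (P / 2 - a + (P - 1) * iu / 2)
           + a * (P * (2 - P) / 4 - 2 * a ^ 2 + a * P / 2 + a * (P - 1) * iu / 2))
        + 4 * (Q - 1) * iP * a * (1 - a) + 2 * P * a - 4 * Q * (P + 1) * iP * a * (1 - a))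
      + (16 * iP * ((P - 1) * iu / 2 - 2 * a * (P / 2 - a + (P - 1) * iu / 2)
           + a * (P * (2 - P) / 4 - 2 * a ^ 2 + a * P / 2 + a * (P - 1) * iu / 2))
        + 8 * (Q - 1) * iP * a * (1 - a) - 2 * P * Q + 4 * P * a
        - 40 * Q * iP * a * (1 - a) - 32 * iP * a ^ 2 * (1 - a)) * W"
    unfolding alpha_def beta_def psi_coeff_resolvent_a_def a_def[symmetric] W_def[symmetric] dP Let_def
    by (simp only: mult.assoc)
  show ?thesis unfolding L R using h by algebra
qed

lemma sum_nontrivial_unit_roots_inverse_plus_one_complement:
  assumes "odd p"
  shows "(\<Sum>u\<in>unit_roots p - {1}. 1 / (u + 1) * (1 - 1 / (u + 1))) = (of_nat p ^ 2 - 1) / 4"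
proof -
  have p0: "p > 0" using assms by (auto intro!: odd_pos)
  have "(\<Sum>u\<in>unit_roots p - {1}. 1 / (u + 1) * (1 - 1 / (u + 1)))
      = (\<Sum>u\<in>unit_roots p - {1}. 1 / (u + 1)) - (\<Sum>u\<in>unit_roots p - {1}. 1 / (u + 1) ^ 2)"
    unfolding sum_subtractf[symmetric] by (rule sum.cong) (simp_all add: algebra_simps power2_eq_square)
  also have "\<dots> = (of_nat p / 2 - 1 / 2) - (of_nat p * (2 - of_nat p) / 4 - 1 / 4)"
    using p0 by (simp add: sum_diff1 sum_unit_roots_inverse_plus_one[OF assms]
        sum_unit_roots_inverse_plus_one_squared[OF assms])
  also have "\<dots> = (of_nat p ^ 2 - 1) / 4" by (simp add: field_simps power2_eq_square)
  finally show ?thesis .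
qed

lemma sum_alpha_beta_nontrivial_unit_roots:
  assumes "odd p" "coprime p q"
  defines "P \<equiv> of_nat p :: complex"
  shows "(\<Sum>u\<in>unit_roots p - {1}. alpha P Q (1 / (u + 1)) + beta P Q (1 / (u + 1)) * (1 / (u ^ q - 1)))
       = ((8 * Q * (4 - P) + 16) / P * ((P ^ 2 - 1) / 4) + (P - 1) * (2 * P * Q)) / 2"
proof -
  have p0: "p > 0" using assms by (auto intro!: odd_pos)
  have P0: "P \<noteq> 0" using p0 by (simp add: P_def)
  let ?A = "unit_roots p - {1}"
  define f where "f u = alpha P Q (1 / (u + 1)) + beta P Q (1 / (u + 1)) * (1 / (u ^ q - 1))" for u
  \<comment> \<open>u \<mapsto> 1/u sends a = 1/(u + 1) to 1 - a and 1/(u^q - 1) to -1 - 1/(u^q - 1)\<close>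
  have reflect: "f u + f (inverse u) = (8 * Q * (4 - P) + 16) / P * (1 / (u + 1)) * (1 - 1 / (u + 1)) + 2 * P * Q"
    if u: "u \<in> ?A" for u
  proof -
    have u0: "u \<noteq> 0" using unit_roots_nonzero[OF p0] u by auto
    have u1: "u + 1 \<noteq> 0" using unit_roots_odd_plus_one_nonzero[OF assms(1)] u by auto
    have uq: "u ^ q - 1 \<noteq> 0" using unit_roots_coprime_eq_1[OF assms(2) p0, of u] u by auto
    define a where "a = 1 / (u + 1)"
    have a0: "a \<noteq> 0" and a1: "a \<noteq> 1" using u0 u1 by (simp_all add: a_def field_simps)
    have ia: "1 / (inverse u + 1) = 1 - a" using u0 u1 by (simp add: a_def field_simps)
    have iW: "1 / (inverse u ^ q - 1) = - 1 - 1 / (u ^ q - 1)"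
      using uq u0 by (simp add: power_inverse field_simps)
    have "f u + f (inverse u) = alpha P Q a + alpha P Q (1 - a) - beta P Q a"
      unfolding f_def ia iW a_def[symmetric] beta_reflect[OF P0 a0 a1] by (simp add: algebra_simps)
    also have "\<dots> = (8 * Q * (4 - P) + 16) / P * a * (1 - a) + 2 * P * Q"
      by (rule alpha_add_reflect[OF P0 a0 a1])
    finally show ?thesis by (simp add: a_def)
  qed
  have "(\<Sum>u\<in>?A. f u) = (\<Sum>u\<in>?A. f (inverse u))"
    by (rule sum.reindex_bij_witness[where i=inverse and j=inverse]) (auto simp: power_inverse)
  then have "2 * (\<Sum>u\<in>?A. f u) = (\<Sum>u\<in>?A. f u + f (inverse u))"
    by (simp add: sum.distrib)
  also have "\<dots> = (8 * Q * (4 - P) + 16) / P * (\<Sum>u\<in>?A. 1 / (u + 1) * (1 - 1 / (u + 1)))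
      + (\<Sum>u\<in>?A. 2 * P * Q)"
    by (simp only: reflect sum.distrib sum_distrib_left mult.assoc cong: sum.cong)
  also have "\<dots> = (8 * Q * (4 - P) + 16) / P * ((P ^ 2 - 1) / 4) + (P - 1) * (2 * P * Q)"
    unfolding sum_nontrivial_unit_roots_inverse_plus_one_complement[OF assms(1)]
    using p0 by (simp add: P_def card_unit_roots of_nat_diff)
  finally have "(\<Sum>u\<in>?A. f u)
      = ((8 * Q * (4 - P) + 16) / P * ((P ^ 2 - 1) / 4) + (P - 1) * (2 * P * Q)) / 2"
    by (simp add: field_simps)
  then show ?thesis unfolding f_def .
qed

section \<open>Evaluation of the double sum\<close>

lemma sum_cot_cot_over_cos_squared_eq_double_sum:
  assumes "coprime p q" "p > 0" "q > 0"
  shows "complex_of_real (\<Sum>n\<in>{n. 1 \<le> n \<and> n \<le> p * q - 1 \<and> \<not> p dvd n \<and> \<not> q dvd n}.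
              cot (pi * real n / real p) * cot (pi * real n / real q)
                / (cos (pi * real n / real (p * q)))\<^sup>2)
         = (\<Sum>u\<in>unit_roots p - {1}. \<Sum>v\<in>unit_roots q - {1}. - cot_ratio (u ^ q) * psi p (u * v))"
  unfolding sum_cot_cot_over_cos_squared_eq_unit_roots[OF assms]
    sum_unit_roots_coprime_product[OF assms]
  by (intro sum.cong refl) (simp add: power_mult_distrib)

lemma sum_over_coset_eq_diagonal_term:
  assumes "odd p" "odd q" "coprime p q" "u \<in> unit_roots p"
  defines "P \<equiv> of_nat p :: complex" and "Q \<equiv> of_nat q :: complex"
  shows "(\<Sum>v\<in>unit_roots q - {1}. - cot_ratio (u ^ q) * psi p (u * v))
       = - (8 / P) * (cot_ratio (u ^ q) * twisted_resolvent p q u) + diagonal_term P Q u (u ^ q)"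
  unfolding sum_distrib_left[symmetric] sum_psi_over_coset[OF assms(1-4)]
  by (simp add: diagonal_term_def P_def Q_def algebra_simps)

lemma double_sum_eq_diagonal_off_diagonal:
  assumes "odd p" "odd q" "coprime p q"
  defines "P \<equiv> of_nat p :: complex" and "Q \<equiv> of_nat q :: complex"
  shows "(\<Sum>u\<in>unit_roots p - {1}. \<Sum>v\<in>unit_roots q - {1}. - cot_ratio (u ^ q) * psi p (u * v))
       = 2 * Q / P * cot_ratio_resolvent P 1
         + (\<Sum>u\<in>unit_roots p - {1}. diagonal_term P Q u (u ^ q) - 8 / P * off_diagonal_term P Q u (u ^ q))"
proof -
  have p0: "p > 0" and q0: "q > 0" using assms by (auto intro!: odd_pos)
  let ?S = "unit_roots p - {1}"
  let ?c = "\<lambda>w. psi_coeff w * (- Q * w ^ (q - 1)) * cot_ratio_resolvent P (w ^ q)"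
  have "(\<Sum>u\<in>?S. cot_ratio (u ^ q) * twisted_resolvent p q u) = (\<Sum>w\<in>unit_roots p. ?c w)"
    unfolding P_def Q_def by (rule sum_cot_ratio_times_twisted_resolvent[OF assms(1,3)])
  also have "\<dots> = ?c 1 + (\<Sum>w\<in>?S. ?c w)"
    by (rule sum.remove) (use p0 in auto)
  also have "(\<Sum>w\<in>?S. ?c w) = (\<Sum>w\<in>?S. off_diagonal_term P Q w (w ^ q))"
  proof (rule sum.cong[OF refl])
    fix w assume w: "w \<in> ?S"
    have "w ^ q = w * w ^ (q - 1)" using q0 by (simp add: power_eq_if)
    then have "w ^ q / w = w ^ (q - 1)" using unit_roots_nonzero[OF p0] w by simp
    then show "?c w = off_diagonal_term P Q w (w ^ q)" by (simp add: off_diagonal_term_def)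
  qed
  finally have off: "(\<Sum>u\<in>?S. cot_ratio (u ^ q) * twisted_resolvent p q u)
      = - Q / 4 * cot_ratio_resolvent P 1 + (\<Sum>w\<in>?S. off_diagonal_term P Q w (w ^ q))"
    by (simp add: psi_coeff_def)
  have "(\<Sum>u\<in>?S. \<Sum>v\<in>unit_roots q - {1}. - cot_ratio (u ^ q) * psi p (u * v))
      = - (8 / P) * (\<Sum>u\<in>?S. cot_ratio (u ^ q) * twisted_resolvent p q u)
        + (\<Sum>u\<in>?S. diagonal_term P Q u (u ^ q))"
    unfolding P_def Q_def sum_distrib_left sum.distrib[symmetric]
    by (intro sum.cong refl) (use sum_over_coset_eq_diagonal_term[OF assms(1-3)] in auto)
  then show ?thesis
    unfolding off sum_subtractf sum_distrib_left[symmetric] by (simp add: algebra_simps)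
qed

lemma sum_diagonal_off_diagonal:
  assumes "odd p" "coprime p q"
  defines "P \<equiv> of_nat p :: complex" and "Q \<equiv> of_nat q :: complex"
  shows "(\<Sum>u\<in>unit_roots p - {1}. diagonal_term P Q u (u ^ q) - 8 / P * off_diagonal_term P Q u (u ^ q))
       = (\<Sum>u\<in>unit_roots p - {1}. rhs_summand P Q u (u ^ q))
         + ((8 * Q * (4 - P) + 16) / P * ((P ^ 2 - 1) / 4) + (P - 1) * (2 * P * Q)) / 2"
proof -
  have p0: "p > 0" using assms by (auto intro!: odd_pos)
  have pt: "diagonal_term P Q u (u ^ q) - 8 / P * off_diagonal_term P Q u (u ^ q)
      = rhs_summand P Q u (u ^ q) + (alpha P Q (1 / (u + 1)) + beta P Q (1 / (u + 1)) * (1 / (u ^ q - 1)))"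
    if u: "u \<in> unit_roots p - {1}" for u
  proof -
    have "u \<noteq> 0" "u + 1 \<noteq> 0" "u ^ q \<noteq> 1"
      using u unit_roots_nonzero[OF p0] unit_roots_odd_plus_one_nonzero[OF assms(1)]
        unit_roots_coprime_eq_1[OF assms(2) p0, of u] by auto
    moreover have "u ^ q \<in> unit_roots p" using u by (blast intro: power_mem_unit_roots)
    then have "u ^ q + 1 \<noteq> 0" using unit_roots_odd_plus_one_nonzero[OF assms(1)] by blast
    ultimately show ?thesis
      using diagonal_off_diagonal_decomposition[of P u "u ^ q" Q] p0 by (simp add: P_def algebra_simps)
  qed
  then have "(\<Sum>u\<in>unit_roots p - {1}. diagonal_term P Q u (u ^ q) - 8 / P * off_diagonal_term P Q u (u ^ q))
      = (\<Sum>u\<in>unit_roots p - {1}. rhs_summand P Q u (u ^ q))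
        + (\<Sum>u\<in>unit_roots p - {1}. alpha P Q (1 / (u + 1)) + beta P Q (1 / (u + 1)) * (1 / (u ^ q - 1)))"
    by (simp only: sum.distrib[symmetric] cong: sum.cong)
  then show ?thesis unfolding P_def by (simp only: sum_alpha_beta_nontrivial_unit_roots[OF assms(1,2)])
qed

theorem mainTheorem13:
  fixes p q :: nat
  assumes "odd p" and "odd q" and "p \<ge> 3" and "q \<ge> 3" and "coprime p q"
  defines "\<omega> \<equiv> (\<lambda>j::nat. cis (2 * pi * real j / real p))"
  shows "complex_of_real
           (\<Sum>n\<in>{n. 1 \<le> n \<and> n \<le> p * q - 1 \<and> \<not> p dvd n \<and> \<not> q dvd n}.
              cot (pi * real n / real p) * cot (pi * real n / real q)
                / (cos (pi * real n / real (p * q)))\<^sup>2)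
       = complex_of_real (2 / (3 * real p) * (real p ^ 2 - 1) * (5 * real q + 3))
         + 32 / of_nat p * (\<Sum>j=1..p-1. \<omega> j / ((\<omega> j + 1) ^ 3 * (\<omega> j ^ q - 1)))
         - 32 * of_nat q / of_nat p * (\<Sum>j=1..p-1. \<omega> j / ((\<omega> j + 1) ^ 2 * (\<omega> j ^ q - 1) ^ 2))"
proof -
  \<comment> \<open>only oddness and coprimality are used\<close>
  have p0: "p > 0" and q0: "q > 0" using assms by auto
  define P where "P = (of_nat p :: complex)"
  define Q where "Q = (of_nat q :: complex)"
  have rhs: "32 / of_nat p * (\<Sum>j=1..p-1. \<omega> j / ((\<omega> j + 1) ^ 3 * (\<omega> j ^ q - 1)))
         - 32 * of_nat q / of_nat p * (\<Sum>j=1..p-1. \<omega> j / ((\<omega> j + 1) ^ 2 * (\<omega> j ^ q - 1) ^ 2))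
       = (\<Sum>u\<in>unit_roots p - {1}. rhs_summand P Q u (u ^ q))"
    unfolding \<omega>_def rhs_summand_def P_def Q_def
      sum_cis_eq_sum_nontrivial_unit_roots[OF p0, of "\<lambda>u. u / ((u + 1) ^ 3 * (u ^ q - 1))"]
      sum_cis_eq_sum_nontrivial_unit_roots[OF p0, of "\<lambda>u. u / ((u + 1) ^ 2 * (u ^ q - 1) ^ 2)"]
    by (simp only: sum_subtractf sum_distrib_left)
  have const: "2 * Q / P * cot_ratio_resolvent P 1
      + ((8 * Q * (4 - P) + 16) / P * ((P ^ 2 - 1) / 4) + (P - 1) * (2 * P * Q)) / 2
      = complex_of_real (2 / (3 * real p) * (real p ^ 2 - 1) * (5 * real q + 3))"
    using p0 by (simp add: cot_ratio_resolvent_def P_def Q_def field_simps)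
      (simp add: algebra_simps power2_eq_square)
  show ?thesis
    unfolding add_diff_eq[symmetric] rhs sum_cot_cot_over_cos_squared_eq_double_sum[OF assms(5) p0 q0]
      double_sum_eq_diagonal_off_diagonal[OF assms(1,2,5)]
      sum_diagonal_off_diagonal[OF assms(1,5)] const[symmetric] P_def Q_def
    by (simp add: algebra_simps)
qed

end
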